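(* For each of the sets $\{000,001,010,100\}$, $\{000,001,010,100,111\}$ and $\{000,001,010,111\}$, and for every set obtained from any of them by any sequence of coordinate negations and coordinate permutations, $\rho(\mathcal S)=\log_2 6$.
   Context: Binary triples $(x_1,x_2,x_3)\in\{0,1\}^3$ are written $x_1x_2x_3$. Let $\mathcal S\subseteq\{0,1\}^3$ be nonempty. A distribution scheme with domain $\mathcal S$ is a pair $(P_R,\psi)$ where $P_R$ is a probability distribution on a finite set $\mathcal R$ and $\psi:\mathcal S\times\mathcal R\to\mathcal W_{12}\times\mathcal W_{23}\times\mathcal W_{31}$ for finite share alphabets. Given $\mathbf x=(x_1,x_2,x_3)\in\mathcal S$, the shares are $(W_{12},W_{23},W_{31})=\psi(\mathbf x,R)$, $R\sim P_R$. Party $P_1$ sees $V_1=(W_{12},W_{31})$, $P_2$ sees $V_2=(W_{23},W_{12})$, $P_3$ sees $V_3=(W_{31},W_{23})$. It is a 3SS scheme if (Correctness) for each $i$ there is a function $\phi_i$ with $\Pr[\phi_i(V_i)=x_i]=1$ for every $\mathbf x\in\mathcal S$, and (Perfect privacy) for each $i$ and all $\mathbf x,\mathbf x'\in\mathcal S$ with $x_i=x'_i$, $V_i$ has the same distribution under secret $\mathbf x$ as under $\mathbf x'$. The randomness complexity $\rho(\mathcal S)$ is the minimum of $\log_2|\mathcal R|$ over all 3SS schemes with domain $\mathcal S$. A coordinate negation maps $\mathcal S$ to $\{\mathbf x\oplus e_i:\mathbf x\in\mathcal S\}$; a coordinate permutation permutes the three coordinates of every element. *)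

theory Defs
  imports "HOL-Probability.Probability_Mass_Function"
begin

text \<open>Binary triples x1x2x3 are modelled as bool \<times> bool \<times> bool;
  coordinates are indexed 0,1,2 (corresponding to the paper's 1,2,3).\<close>

type_synonym triple = "bool \<times> bool \<times> bool"

definition tri :: "bool \<Rightarrow> bool \<Rightarrow> bool \<Rightarrow> triple" where
  "tri a b c = (a, b, c)"

definition coord :: "triple \<Rightarrow> nat \<Rightarrow> bool" where
  "coord x i = (if i = 0 then fst x else if i = 1 then fst (snd x) else snd (snd x))"

definition flip :: "nat \<Rightarrow> triple \<Rightarrow> triple" where
  "flip i x = tri (if i = 0 then \<not> coord x 0 else coord x 0)
                  (if i = 1 then \<not> coord x 1 else coord x 1)
                  (if i = 2 then \<not> coord x 2 else coord x 2)"

definition permute :: "(nat \<Rightarrow> nat) \<Rightarrow> triple \<Rightarrow> triple" where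
  "permute \<sigma> x = tri (coord x (\<sigma> 0)) (coord x (\<sigma> 1)) (coord x (\<sigma> 2))"

inductive coord_equiv :: "triple set \<Rightarrow> triple set \<Rightarrow> bool" where
  refl: "coord_equiv S S"
| neg: "coord_equiv S T \<Longrightarrow> i < 3 \<Longrightarrow> coord_equiv S (flip i ` T)"
| perm: "coord_equiv S T \<Longrightarrow> bij_betw \<sigma> {0,1,2} {0,1,2} \<Longrightarrow> coord_equiv S (permute \<sigma> ` T)"

text \<open>Shares (W12, W23, W31), share alphabets encoded in nat (finite images).
  Views: P1 sees (W12,W31), P2 sees (W23,W12), P3 sees (W31,W23).\<close>
definition view :: "nat \<Rightarrow> nat \<times> nat \<times> nat \<Rightarrow> nat \<times> nat" where
  "view i w = (case w of (w12, w23, w31) \<Rightarrow>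
      (if i = 0 then (w12, w31) else if i = 1 then (w23, w12) else (w31, w23)))"

text \<open>A 3SS scheme with domain S whose randomness set is R = {..<n},
  with distribution P on R and share function psi.\<close>
definition is_3SS :: "triple set \<Rightarrow> nat \<Rightarrow> nat pmf \<Rightarrow> (triple \<Rightarrow> nat \<Rightarrow> nat \<times> nat \<times> nat) \<Rightarrow> bool" where
  "is_3SS S n P psi \<longleftrightarrow>
     set_pmf P \<subseteq> {..<n} \<and>
     (\<forall>i<3. \<exists>phi. \<forall>x\<in>S. \<forall>r\<in>set_pmf P. phi (view i (psi x r)) = coord x i) \<and>
     (\<forall>i<3. \<forall>x\<in>S. \<forall>x'\<in>S. coord x i = coord x' i \<longrightarrow>
        map_pmf (\<lambda>r. view i (psi x r)) P = map_pmf (\<lambda>r. view i (psi x' r)) P)"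

definition rho :: "triple set \<Rightarrow> real" where
  "rho S = log 2 (real (LEAST n. \<exists>P psi. is_3SS S n P psi))"

end

theory Submission
  imports Defs
begin

text \<open>Upper bound: an explicit scheme for \<open>{000, 001, 010, 100, 111}\<close> with six equally likely share
  vectors, in which every privacy condition is an equality of multisets of views.

  Lower bound: let \<open>T\<close> be the support of the share vector for the secret \<open>000\<close>. The secrets
  \<open>000\<close> and \<open>001\<close> look alike to the first two parties but not to the third, so every vector in \<open>T\<close>
  has a partner in \<open>T\<close> with the same \<open>W\<^sub>1\<^sub>2\<close> and a different \<open>W\<^sub>2\<^sub>3\<close>. Chasing views
  through the supports of \<open>100\<close> and \<open>010\<close> (or of \<open>010\<close>, \<open>001\<close> and \<open>111\<close>) produces three
  distinct values of \<open>W\<^sub>1\<^sub>2\<close> in \<open>T\<close>, hence \<open>|R| \<ge> |T| \<ge> 2 \<cdot> 3\<close>.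

  Both bounds are invariant under negating a coordinate (relabel the secrets) and permuting
  coordinates (relabel the parties and reshuffle the three shares).\<close>

abbreviation t000 :: triple where "t000 \<equiv> tri False False False"
abbreviation t001 :: triple where "t001 \<equiv> tri False False True"
abbreviation t010 :: triple where "t010 \<equiv> tri False True False"
abbreviation t100 :: triple where "t100 \<equiv> tri True False False"
abbreviation t111 :: triple where "t111 \<equiv> tri True True True"

abbreviation has_3SS :: "triple set \<Rightarrow> nat \<Rightarrow> bool" where
  "has_3SS S n \<equiv> \<exists>P psi. is_3SS S n P psi"

lemma coord_tri [simp]:
  "coord (tri a b c) 0 = a" "coord (tri a b c) (Suc 0) = b" "coord (tri a b c) 2 = c"
  by (simp_all add: coord_def tri_def)

lemma tri_eq_iff [simp]: "tri a b c = tri a' b' c' \<longleftrightarrow> a = a' \<and> b = b' \<and> c = c'"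
  by (simp add: tri_def)

lemma less_3_cases: "(j::nat) < 3 \<Longrightarrow> j = 0 \<or> j = 1 \<or> j = 2"
  by auto

lemma less_6_cases: "(r::nat) < 6 \<Longrightarrow> r = 0 \<or> r = 1 \<or> r = 2 \<or> r = 3 \<or> r = 4 \<or> r = 5"
  by auto

lemma triple_eqI:
  assumes "\<And>j. j < 3 \<Longrightarrow> coord x j = coord y j"
  shows "x = y"
  using assms[of 0] assms[of 1] assms[of 2] by (cases x; cases y) (simp add: coord_def)

text \<open>The view of party 2 is stated for \<open>Suc 0\<close>, the simp normal form of \<open>1 :: nat\<close>.\<close>
lemma view_simps [simp]:
  "view 0 (a, b, c) = (a, c)" "view (Suc 0) (a, b, c) = (b, a)" "view 2 (a, b, c) = (c, b)"
  by (simp_all add: view_def)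

lemma mem_view_image_iff [simp]:
  "(a, c) \<in> view 0 ` X \<longleftrightarrow> (\<exists>b. (a, b, c) \<in> X)"
  "(b, a) \<in> view (Suc 0) ` X \<longleftrightarrow> (\<exists>c. (a, b, c) \<in> X)"
  "(c, b) \<in> view 2 ` X \<longleftrightarrow> (\<exists>a. (a, b, c) \<in> X)"
  by (force simp: view_def image_iff split: prod.splits)+

lemma is_3SS_mono:
  assumes scheme: "is_3SS S n P psi" and sub: "S' \<subseteq> S"
  shows "is_3SS S' n P psi"
  unfolding is_3SS_def
proof (intro conjI allI impI ballI)
  show "set_pmf P \<subseteq> {..<n}"
    using scheme by (simp add: is_3SS_def)
next
  fix i :: nat assume "i < 3"
  then obtain phi where "\<forall>x\<in>S. \<forall>r\<in>set_pmf P. phi (view i (psi x r)) = coord x i"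
    using scheme unfolding is_3SS_def by blast
  then show "\<exists>phi. \<forall>x\<in>S'. \<forall>r\<in>set_pmf P. phi (view i (psi x r)) = coord x i"
    using sub by blast
next
  fix i :: nat and x x' assume "i < 3" "x \<in> S'" "x' \<in> S'" "coord x i = coord x' i"
  then show "map_pmf (\<lambda>r. view i (psi x r)) P = map_pmf (\<lambda>r. view i (psi x' r)) P"
    using scheme sub unfolding is_3SS_def by (meson subsetD)
qed

lemma is_3SS_transport:
  assumes scheme: "is_3SS T n P psi"
    and inverse: "\<And>x. x \<in> T \<Longrightarrow> g (f x) = x"
    and index: "\<And>j. j < 3 \<Longrightarrow> \<pi> j < 3"
    and coord_f: "\<And>j x. j < 3 \<Longrightarrow> coord (f x) j = (coord x (\<pi> j) \<noteq> neg j)"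
    and view_\<rho>: "\<And>j w. j < 3 \<Longrightarrow> view j (\<rho> w) = \<iota> j (view (\<pi> j) w)"
    and inj_\<iota>: "\<And>j. inj (\<iota> j)"
  shows "is_3SS (f ` T) n P (\<lambda>y r. \<rho> (psi (g y) r))"
  unfolding is_3SS_def
proof (intro conjI allI impI ballI)
  show "set_pmf P \<subseteq> {..<n}"
    using scheme by (simp add: is_3SS_def)
next
  fix j :: nat assume j: "j < 3"
  obtain phi where phi: "\<forall>x\<in>T. \<forall>r\<in>set_pmf P. phi (view (\<pi> j) (psi x r)) = coord x (\<pi> j)"
    using scheme index[OF j] by (auto simp: is_3SS_def)
  show "\<exists>phi'. \<forall>y\<in>f ` T. \<forall>r\<in>set_pmf P. phi' (view j (\<rho> (psi (g y) r))) = coord y j"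
  proof (intro exI ballI)
    fix y r assume "y \<in> f ` T" "r \<in> set_pmf P"
    then obtain x where "x \<in> T" "y = f x" by blast
    with phi \<open>r \<in> set_pmf P\<close> show "(phi (inv (\<iota> j) (view j (\<rho> (psi (g y) r)))) \<noteq> neg j) = coord y j"
      by (simp add: inverse coord_f view_\<rho> j inj_\<iota>)
  qed
next
  fix j :: nat and y y' assume j: "j < 3" and y: "y \<in> f ` T" and y': "y' \<in> f ` T"
    and same: "coord y j = coord y' j"
  obtain x x' where x: "x \<in> T" "y = f x" and x': "x' \<in> T" "y' = f x'"
    using y y' by blast
  have "coord x (\<pi> j) = coord x' (\<pi> j)"
    using same by (auto simp: x x' coord_f j)
  then have "map_pmf (\<lambda>r. view (\<pi> j) (psi x r)) P = map_pmf (\<lambda>r. view (\<pi> j) (psi x' r)) P"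
    using scheme index[OF j] x(1) x'(1) unfolding is_3SS_def by blast
  then have "map_pmf (\<iota> j) (map_pmf (\<lambda>r. view (\<pi> j) (psi x r)) P)
           = map_pmf (\<iota> j) (map_pmf (\<lambda>r. view (\<pi> j) (psi x' r)) P)"
    by (rule arg_cong)
  moreover have "g y = x" "g y' = x'"
    using inverse x x' by blast+
  ultimately show "map_pmf (\<lambda>r. view j (\<rho> (psi (g y) r))) P = map_pmf (\<lambda>r. view j (\<rho> (psi (g y') r))) P"
    by (simp add: view_\<rho>[OF j] map_pmf_comp)
qed

lemma coord_flip: "j < 3 \<Longrightarrow> coord (flip i x) j = (coord x j \<noteq> (j = i))"
  using less_3_cases[of j] by (auto simp: flip_def)

lemma flip_flip [simp]: "flip i (flip i x) = x"
  by (rule triple_eqI) (auto simp: coord_flip)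

lemma has_3SS_flip:
  assumes "has_3SS T n"
  shows "has_3SS (flip i ` T) n"
proof -
  obtain P psi where "is_3SS T n P psi"
    using assms by blast
  then have "is_3SS (flip i ` T) n P (\<lambda>y r. id (psi (flip i y) r))"
    by (rule is_3SS_transport[where \<pi> = id and neg = "\<lambda>j. j = i" and \<iota> = "\<lambda>_. id"])
       (simp_all add: coord_flip)
  then show ?thesis
    by blast
qed

lemma has_3SS_flip_iff: "has_3SS (flip i ` T) n \<longleftrightarrow> has_3SS T n"
  using has_3SS_flip[of "flip i ` T" n i] has_3SS_flip[of T n i] by (auto simp: image_image)

text \<open>The share held by parties \<open>p\<close> and \<open>q\<close>: \<open>{0,1} \<mapsto> W\<^sub>1\<^sub>2\<close>, \<open>{1,2} \<mapsto> W\<^sub>2\<^sub>3\<close>,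
  \<open>{2,0} \<mapsto> W\<^sub>3\<^sub>1\<close>. Under \<open>reshare \<sigma>\<close> party \<open>j\<close> receives the view of the old party
  \<open>\<sigma> j\<close>, with its two components swapped if \<open>\<sigma>\<close> reverses the cyclic order of the parties.\<close>
definition edge_share :: "nat \<Rightarrow> nat \<Rightarrow> nat \<times> nat \<times> nat \<Rightarrow> nat" where
  "edge_share p q w = (if p + q = 1 then fst w else if p + q = 3 then fst (snd w) else snd (snd w))"

definition reshare :: "(nat \<Rightarrow> nat) \<Rightarrow> nat \<times> nat \<times> nat \<Rightarrow> nat \<times> nat \<times> nat" where
  "reshare \<sigma> w = (edge_share (\<sigma> 0) (\<sigma> 1) w, edge_share (\<sigma> 1) (\<sigma> 2) w, edge_share (\<sigma> 2) (\<sigma> 0) w)"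

definition view_orient :: "(nat \<Rightarrow> nat) \<Rightarrow> nat \<times> nat \<Rightarrow> nat \<times> nat" where
  "view_orient \<sigma> = (if \<sigma> 1 = (\<sigma> 0 + 1) mod 3 then id else prod.swap)"

lemma bij_betw_012_cases:
  fixes \<sigma> :: "nat \<Rightarrow> nat"
  assumes "bij_betw \<sigma> {0,1,2} {0,1,2}"
  shows "(\<sigma> 0, \<sigma> 1, \<sigma> 2) \<in> {(0,1,2), (0,2,1), (1,0,2), (1,2,0), (2,0,1), (2,1,0)}"
proof -
  have "\<sigma> 0 \<in> {0,1,2}" "\<sigma> 1 \<in> {0,1,2}" "\<sigma> 2 \<in> {0,1,2}"
    using bij_betwE[OF assms] by auto
  moreover have "\<sigma> 0 \<noteq> \<sigma> 1" "\<sigma> 0 \<noteq> \<sigma> 2" "\<sigma> 1 \<noteq> \<sigma> 2"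
    using bij_betw_imp_inj_on[OF assms] by (simp_all add: inj_on_eq_iff)
  ultimately show ?thesis
    by (simp only: insert_iff empty_iff) (elim disjE; simp)
qed

lemma view_reshare:
  assumes "bij_betw \<sigma> {0,1,2::nat} {0,1,2::nat}" "j < 3"
  shows "view j (reshare \<sigma> w) = view_orient \<sigma> (view (\<sigma> j) w)"
  using bij_betw_012_cases[OF assms(1)] less_3_cases[OF assms(2)]
  by (cases w) (simp only: insert_iff empty_iff prod.inject;
      elim disjE conjE; simp add: reshare_def edge_share_def view_orient_def view_def)

lemma inj_view_orient: "inj (view_orient \<sigma>)"
  by (simp add: view_orient_def swap_inj_on)

lemma coord_permute: "j < 3 \<Longrightarrow> coord (permute \<sigma> x) j = coord x (\<sigma> j)"
  using less_3_cases[of j] by (auto simp: permute_def)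

lemma permute_inv_into:
  assumes "bij_betw \<sigma> {0,1,2::nat} {0,1,2::nat}"
  shows "permute (inv_into {0,1,2} \<sigma>) (permute \<sigma> x) = x"
proof (rule triple_eqI)
  fix j :: nat assume "j < 3"
  then have "j \<in> {0,1,2}" by auto
  then have "inv_into {0,1,2} \<sigma> j < 3" "\<sigma> (inv_into {0,1,2} \<sigma> j) = j"
    using bij_betwE[OF bij_betw_inv_into[OF assms]] bij_betw_inv_into_right[OF assms] by force+
  then show "coord (permute (inv_into {0,1,2} \<sigma>) (permute \<sigma> x)) j = coord x j"
    using \<open>j < 3\<close> by (simp add: coord_permute)
qed

lemma has_3SS_permute:
  assumes \<sigma>: "bij_betw \<sigma> {0,1,2::nat} {0,1,2::nat}" and "has_3SS T n"
  shows "has_3SS (permute \<sigma> ` T) n"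
proof -
  obtain P psi where "is_3SS T n P psi"
    using assms(2) by blast
  moreover have "\<sigma> j < 3" if "j < 3" for j
    using bij_betw_012_cases[OF \<sigma>] less_3_cases[OF that] by auto
  ultimately have "is_3SS (permute \<sigma> ` T) n P (\<lambda>y r. reshare \<sigma> (psi (permute (inv_into {0,1,2} \<sigma>) y) r))"
    by (intro is_3SS_transport[where f = "permute \<sigma>" and \<pi> = \<sigma> and neg = "\<lambda>_. False"
          and \<iota> = "\<lambda>_. view_orient \<sigma>"] permute_inv_into[OF \<sigma>] view_reshare[OF \<sigma>] inj_view_orient)
       (simp_all add: coord_permute)
  then show ?thesis
    by blast
qed

lemma has_3SS_permute_iff:
  assumes \<sigma>: "bij_betw \<sigma> {0,1,2::nat} {0,1,2::nat}"
  shows "has_3SS (permute \<sigma> ` T) n \<longleftrightarrow> has_3SS T n"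
proof
  have "permute (inv_into {0,1,2} \<sigma>) ` permute \<sigma> ` T = T"
    unfolding image_image permute_inv_into[OF \<sigma>] by simp
  moreover assume "has_3SS (permute \<sigma> ` T) n"
  ultimately show "has_3SS T n"
    using has_3SS_permute[OF bij_betw_inv_into[OF \<sigma>]] by metis
next
  assume "has_3SS T n"
  then show "has_3SS (permute \<sigma> ` T) n"
    by (rule has_3SS_permute[OF \<sigma>])
qed

lemma has_3SS_coord_equiv: "coord_equiv S0 S \<Longrightarrow> has_3SS S n \<longleftrightarrow> has_3SS S0 n"
  by (induction rule: coord_equiv.induct) (simp_all add: has_3SS_flip_iff has_3SS_permute_iff)

definition share_support :: "nat pmf \<Rightarrow> (triple \<Rightarrow> nat \<Rightarrow> nat \<times> nat \<times> nat) \<Rightarrow> triple \<Rightarrow> (nat \<times> nat \<times> nat) set" where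
  "share_support P psi x = psi x ` set_pmf P"

lemma is_3SS_views_eq:
  assumes "is_3SS S n P psi" "x \<in> S" "x' \<in> S" "i < 3" "coord x i = coord x' i"
  shows "view i ` share_support P psi x = view i ` share_support P psi x'"
proof -
  have "map_pmf (\<lambda>r. view i (psi x r)) P = map_pmf (\<lambda>r. view i (psi x' r)) P"
    using assms unfolding is_3SS_def by blast
  then have "set_pmf (map_pmf (\<lambda>r. view i (psi x r)) P) = set_pmf (map_pmf (\<lambda>r. view i (psi x' r)) P)"
    by (rule arg_cong)
  then show ?thesis
    by (simp add: share_support_def image_image)
qed

lemma is_3SS_views_disjoint:
  assumes "is_3SS S n P psi" "x \<in> S" "x' \<in> S" "i < 3" "coord x i \<noteq> coord x' i"
  shows "view i ` share_support P psi x \<inter> view i ` share_support P psi x' = {}"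
proof -
  obtain phi where phi: "\<forall>x\<in>S. \<forall>r\<in>set_pmf P. phi (view i (psi x r)) = coord x i"
    using assms unfolding is_3SS_def by blast
  have "view i (psi x r) \<noteq> view i (psi x' r')" if "r \<in> set_pmf P" "r' \<in> set_pmf P" for r r'
    using phi that assms(2,3,5) by metis
  then show ?thesis
    unfolding share_support_def by blast
qed

lemma is_3SS_share_support:
  assumes "is_3SS S n P psi"
  shows "finite (share_support P psi x)" "card (share_support P psi x) \<le> n"
    "share_support P psi x \<noteq> {}"
proof -
  have sub: "set_pmf P \<subseteq> {..<n}"
    using assms unfolding is_3SS_def by blast
  then have "finite (set_pmf P)"
    using finite_subset by blast
  then show "finite (share_support P psi x)"
    by (simp add: share_support_def)
  have "card (share_support P psi x) \<le> card (set_pmf P)"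
    unfolding share_support_def using \<open>finite (set_pmf P)\<close> by (rule card_image_le)
  also have "\<dots> \<le> n"
    using card_mono[OF _ sub] by simp
  finally show "card (share_support P psi x) \<le> n" .
  show "share_support P psi x \<noteq> {}"
    by (simp add: share_support_def set_pmf_not_empty)
qed

lemma views_disjointD: "view i ` X \<inter> view i ` Y = {} \<Longrightarrow> x \<in> X \<Longrightarrow> y \<in> Y \<Longrightarrow> view i x \<noteq> view i y"
  by blast

lemma two_mul_card_fst_image_le:
  assumes "finite T" and partner: "\<And>t. t \<in> T \<Longrightarrow> \<exists>t'\<in>T. fst t' = fst t \<and> t' \<noteq> t"
  shows "2 * card (fst ` T) \<le> card T"
proof -
  have "2 \<le> card {t \<in> T. fst t = a}" if a: "a \<in> fst ` T" for a
  proof -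
    obtain t where t: "t \<in> T" "fst t = a"
      using a by force
    then obtain t' where "t' \<in> T" "fst t' = a" "t' \<noteq> t"
      using partner by metis
    then have "card {t, t'} \<le> card {t \<in> T. fst t = a}"
      using t assms(1) by (intro card_mono) auto
    then show ?thesis
      using \<open>t' \<noteq> t\<close> by simp
  qed
  then have "(\<Sum>a\<in>fst ` T. 2) \<le> (\<Sum>a\<in>fst ` T. card {t \<in> T. fst t = a})"
    by (rule sum_mono)
  also have "\<dots> = card T"
    using sum.image_gen[OF assms(1), of "\<lambda>_. 1::nat" fst] by simp
  finally show ?thesis
    by simp
qed

text \<open>Applied to the supports of \<open>000\<close> and \<open>001\<close>, which parties 1 and 2 cannot tell apart
  but party 3 can.\<close>
lemma W12_fibre_nontrivial:
  fixes X Y :: "(nat \<times> nat \<times> nat) set"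
  assumes eq0: "view 0 ` X = view 0 ` Y" and eq1: "view 1 ` X = view 1 ` Y"
    and disj2: "view 2 ` X \<inter> view 2 ` Y = {}" and "t \<in> X"
  shows "\<exists>t'\<in>X. fst t' = fst t \<and> t' \<noteq> t"
proof -
  obtain a b c where t: "t = (a, b, c)" "(a, b, c) \<in> X"
    using \<open>t \<in> X\<close> by (cases t) auto
  have "view 0 (a, b, c) \<in> view 0 ` Y"
    using t eq0 by blast
  then obtain b' where b': "(a, b', c) \<in> Y"
    by auto
  have "view 1 (a, b', c) \<in> view 1 ` X"
    using b' eq1 by blast
  then obtain c' where c': "(a, b', c') \<in> X"
    by auto
  have "b' \<noteq> b"
    using views_disjointD[OF disj2 t(2) b'] by auto
  then show ?thesis
    using c' t(1) by force
qed

lemma three_W12_values_of_weight_one: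
  assumes scheme: "is_3SS S n P psi" and sub: "{t000, t010, t100} \<subseteq> S"
  shows "3 \<le> card (fst ` share_support P psi t000)"
proof -
  define T where "T = share_support P psi"
  have eq1: "view 2 ` T t000 = view 2 ` T t100" "view 1 ` T t100 = view 1 ` T t000"
    and disj1: "view 0 ` T t000 \<inter> view 0 ` T t100 = {}"
    and eq2: "view 2 ` T t000 = view 2 ` T t010" "view 0 ` T t010 = view 0 ` T t000"
    and disj2: "view 1 ` T t000 \<inter> view 1 ` T t010 = {}"
    unfolding T_def using sub
    by (intro is_3SS_views_eq[OF scheme] is_3SS_views_disjoint[OF scheme]; simp)+
  obtain a b c where abc: "(a, b, c) \<in> T t000"
    using is_3SS_share_support(3)[OF scheme] unfolding T_def by fast
  have "view 2 (a, b, c) \<in> view 2 ` T t100"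
    using abc eq1(1) by blast
  then obtain a1 where a1: "(a1, b, c) \<in> T t100"
    by auto
  have "view 1 (a1, b, c) \<in> view 1 ` T t000"
    using a1 eq1(2) by blast
  then obtain c1 where c1: "(a1, b, c1) \<in> T t000"
    by auto
  have "view 2 (a, b, c) \<in> view 2 ` T t010"
    using abc eq2(1) by blast
  then obtain a2 where a2: "(a2, b, c) \<in> T t010"
    by auto
  have "view 0 (a2, b, c) \<in> view 0 ` T t000"
    using a2 eq2(2) by blast
  then obtain b2 where b2: "(a2, b2, c) \<in> T t000"
    by auto
  have "a \<noteq> a1" "a \<noteq> a2" "a1 \<noteq> a2"
    using views_disjointD[OF disj1 abc a1] views_disjointD[OF disj2 abc a2]
      views_disjointD[OF disj2 c1 a2] by auto
  then have "card {a, a1, a2} = 3"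
    by simp
  moreover have "{a, a1, a2} \<subseteq> fst ` T t000"
    using abc c1 b2 by force
  ultimately show ?thesis
    using card_mono[OF finite_imageI[OF is_3SS_share_support(1)[OF scheme]]] unfolding T_def by metis
qed

lemma three_W12_values_with_all_ones:
  assumes scheme: "is_3SS S n P psi" and sub: "{t000, t001, t010, t111} \<subseteq> S"
  shows "3 \<le> card (fst ` share_support P psi t000)"
proof -
  define T where "T = share_support P psi"
  have eq: "view 1 ` T t111 = view 1 ` T t010" "view 0 ` T t010 = view 0 ` T t000"
    "view 2 ` T t111 = view 2 ` T t001" "view 0 ` T t001 = view 0 ` T t000"
    "view 1 ` T t001 = view 1 ` T t000" "view 2 ` T t000 = view 2 ` T t010"
    and disj: "view 1 ` T t111 \<inter> view 1 ` T t000 = {}" "view 1 ` T t010 \<inter> view 1 ` T t000 = {}"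
    "view 0 ` T t111 \<inter> view 0 ` T t000 = {}"
    unfolding T_def using sub
    by (intro is_3SS_views_eq[OF scheme] is_3SS_views_disjoint[OF scheme]; simp)+
  obtain p q r where pqr: "(p, q, r) \<in> T t111"
    using is_3SS_share_support(3)[OF scheme] unfolding T_def by fast
  have "view 1 (p, q, r) \<in> view 1 ` T t010"
    using pqr eq(1) by blast
  then obtain r1 where "(p, q, r1) \<in> T t010"
    by auto
  then have "view 0 (p, q, r1) \<in> view 0 ` T t000"
    using eq(2) by blast
  then obtain q1 where q1: "(p, q1, r1) \<in> T t000"
    by auto
  have "view 2 (p, q, r) \<in> view 2 ` T t001"
    using pqr eq(3) by blast
  then obtain p2 where p2: "(p2, q, r) \<in> T t001"
    by auto
  have "view 0 (p2, q, r) \<in> view 0 ` T t000"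
    using p2 eq(4) by blast
  then obtain q2 where q2: "(p2, q2, r) \<in> T t000"
    by auto
  have "view 1 (p2, q, r) \<in> view 1 ` T t000"
    using p2 eq(5) by blast
  then obtain r2 where r2: "(p2, q, r2) \<in> T t000"
    by auto
  have "view 2 (p2, q2, r) \<in> view 2 ` T t010"
    using q2 eq(6) by blast
  then obtain p3 where p3: "(p3, q2, r) \<in> T t010"
    by auto
  have "view 0 (p3, q2, r) \<in> view 0 ` T t000"
    using p3 eq(2) by blast
  then obtain q3 where q3: "(p3, q3, r) \<in> T t000"
    by auto
  have "p \<noteq> p2" "p \<noteq> p3" "p2 \<noteq> p3"
    using views_disjointD[OF disj(1) pqr r2] views_disjointD[OF disj(3) pqr q3]
      views_disjointD[OF disj(2) p3 q2] by auto
  then have "card {p, p2, p3} = 3"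
    by simp
  moreover have "{p, p2, p3} \<subseteq> fst ` T t000"
    using q1 q2 q3 by force
  ultimately show ?thesis
    using card_mono[OF finite_imageI[OF is_3SS_share_support(1)[OF scheme]]] unfolding T_def by metis
qed

lemma is_3SS_randomness_ge_6:
  assumes scheme: "is_3SS S n P psi"
    and sub: "{t000, t001, t010, t100} \<subseteq> S \<or> {t000, t001, t010, t111} \<subseteq> S"
  shows "6 \<le> n"
proof -
  let ?T = "share_support P psi"
  have "view 0 ` ?T t000 = view 0 ` ?T t001" "view 1 ` ?T t000 = view 1 ` ?T t001"
    "view 2 ` ?T t000 \<inter> view 2 ` ?T t001 = {}"
    using sub by (intro is_3SS_views_eq[OF scheme] is_3SS_views_disjoint[OF scheme]; auto)+
  then have "2 * card (fst ` ?T t000) \<le> card (?T t000)"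
    by (intro two_mul_card_fst_image_le is_3SS_share_support(1)[OF scheme] W12_fibre_nontrivial)
  moreover have "3 \<le> card (fst ` ?T t000)"
    using sub three_W12_values_of_weight_one[OF scheme] three_W12_values_with_all_ones[OF scheme]
    by auto
  ultimately show ?thesis
    using is_3SS_share_support(2)[OF scheme, of t000] by linarith
qed


definition share_table :: "triple \<Rightarrow> (nat \<times> nat \<times> nat) list" where
  "share_table x =
    (if x = t000 then [(2,2,1), (1,1,2), (0,2,2), (2,1,0), (1,0,1), (0,0,0)]
     else if x = t001 then [(0,2,0), (0,0,2), (2,2,0), (2,1,1), (1,0,2), (1,1,1)]
     else if x = t010 then [(1,2,1), (0,1,2), (0,1,0), (2,0,1), (1,2,2), (2,0,0)]
     else if x = t100 then [(1,0,0), (0,2,1), (1,1,0), (2,2,2), (0,0,1), (2,1,2)]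
     else [(1,2,0), (0,1,1), (2,0,2), (1,2,0), (2,0,2), (0,1,1)])"

definition decode :: "nat \<Rightarrow> nat \<times> nat \<Rightarrow> bool" where
  "decode i v = (case v of (p, q) \<Rightarrow>
     if i = 0 then (p + q) mod 3 = 1 else if i = 1 then (q + 2 * p) mod 3 = 2 else (p + q) mod 3 = 2)"

lemma map_pmf_nth_pmf_of_set:
  assumes "xs \<noteq> []"
  shows "map_pmf (\<lambda>r. f (xs ! r)) (pmf_of_set {..<length xs}) = pmf_of_multiset (mset (map f xs))"
proof -
  have "map_pmf (\<lambda>r. f (xs ! r)) (pmf_of_set {..<length xs})
      = pmf_of_multiset (image_mset (\<lambda>r. f (xs ! r)) (mset_set {..<length xs}))"
    using assms by (intro map_pmf_of_set) auto
  also have "image_mset (\<lambda>r. f (xs ! r)) (mset_set {..<length xs})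
      = mset (map (\<lambda>r. f (xs ! r)) [0..<length xs])"
    by (simp only: mset_set_upto_eq_mset_upto mset_map)
  also have "map (\<lambda>r. f (xs ! r)) [0..<length xs] = map f xs"
    by (rule nth_equalityI) simp_all
  finally show ?thesis .
qed

lemma is_3SS_share_table:
  "is_3SS {t000, t001, t010, t100, t111} 6 (pmf_of_set {..<6}) (\<lambda>x r. share_table x ! r)"
  (is "is_3SS ?S 6 ?P ?psi")
proof -
  have length: "length (share_table x) = 6" and nonempty: "share_table x \<noteq> []" for x
    by (simp_all add: share_table_def)
  have view_distr:
    "map_pmf (\<lambda>r. view i (?psi x r)) ?P = pmf_of_multiset (mset (map (view i) (share_table x)))" for i x
    using map_pmf_nth_pmf_of_set[OF nonempty, of "view i" x] unfolding length .
  have correct: "decode i (view i (?psi x r)) = coord x i" if "i < 3" "x \<in> ?S" "r < 6" for i x r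
    using less_3_cases[OF that(1)] that(2) less_6_cases[OF that(3)]
    by (simp only: insert_iff empty_iff simp_thms) (elim disjE; simp add: share_table_def decode_def)
  have privacy: "mset (map (view i) (share_table x)) = mset (map (view i) (share_table x'))"
    if "i < 3" "x \<in> ?S" "x' \<in> ?S" "coord x i = coord x' i" for i x x'
    using less_3_cases[OF that(1)] that(2,3,4)
    by (simp only: insert_iff empty_iff simp_thms) (elim disjE; simp add: share_table_def)
  have support: "set_pmf ?P = {..<6}"
    by (subst set_pmf_of_set) (auto simp: lessThan_empty_iff)
  show ?thesis
    unfolding is_3SS_def
  proof (intro conjI allI impI ballI)
    show "set_pmf ?P \<subseteq> {..<6}"
      by (simp add: support)
  next
    fix i :: nat assume "i < 3"
    then show "\<exists>phi. \<forall>x\<in>?S. \<forall>r\<in>set_pmf ?P. phi (view i (?psi x r)) = coord x i"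
      using correct unfolding support by (intro exI[of _ "decode i"] ballI) simp
  next
    fix i :: nat and x x' assume "i < 3" "x \<in> ?S" "x' \<in> ?S" "coord x i = coord x' i"
    from privacy[OF this]
    show "map_pmf (\<lambda>r. view i (?psi x r)) ?P = map_pmf (\<lambda>r. view i (?psi x' r)) ?P"
      unfolding view_distr by (rule arg_cong)
  qed
qed

theorem mainTheorem9:
  assumes "S0 \<in> {{tri False False False, tri False False True, tri False True False, tri True False False},
                  {tri False False False, tri False False True, tri False True False, tri True False False, tri True True True},
                  {tri False False False, tri False False True, tri False True False, tri True True True}}"
    and "coord_equiv S0 S"
  shows "rho S = log 2 6"
proof -
  have S0: "S0 \<subseteq> {t000, t001, t010, t100, t111}"
    "{t000, t001, t010, t100} \<subseteq> S0 \<or> {t000, t001, t010, t111} \<subseteq> S0"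
    using assms(1) by auto
  have "has_3SS S 6"
    using is_3SS_mono[OF is_3SS_share_table S0(1)] has_3SS_coord_equiv[OF assms(2)] by blast
  moreover have "6 \<le> m" if "has_3SS S m" for m
    using that is_3SS_randomness_ge_6[OF _ S0(2)] has_3SS_coord_equiv[OF assms(2)] by blast
  ultimately have "(LEAST n. has_3SS S n) = 6"
    by (rule Least_equality)
  then show ?thesis
    by (simp add: rho_def)
qed

end
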